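(* Under the standing setup, assume that $f$ is bounded, i.e. $\sup_{q\in\mathcal P}\|f_q\|_\infty<\infty$. Let $u_0\in\mathbb R^d$ and $u(t):=\mathscr S(t)u_0$ for $t\ge0$. Then $u\in C^1([0,\infty);\mathbb R^d)$ is the unique classical solution of $u'(t)=\mathcal Qu(t)$ for $t\ge0$ with $u(0)=u_0$.
   Context: Standing setup: $d\in\mathbb N$; vectors in $\mathbb R^d$ with $\|u\|_\infty=\max_i|u_i|$; inequalities and suprema of vectors are componentwise; reals are identified with constant vectors. A $Q$-matrix is $q\in\mathbb R^{d\times d}$ with $q_{ii}\le0$, $q_{ij}\ge0$ ($i\ne j$), $\sum_jq_{ij}=0$. Let $\mathcal P$ be a set of $Q$-matrices and $f=(f_q)_{q\in\mathcal P}\subset\mathbb R^d$ with $\sup_{q\in\mathcal P}f_q=f_{q_0}=0$ for some $q_0\in\mathcal P$, such that $\mathcal Qu:=\sup_{q\in\mathcal P}(qu+f_q)$ is finite for every $u\in\mathbb R^d$. For $q\in\mathcal P$, $t\ge0$: $S_q(t)u_0:=e^{tq}u_0+\int_0^te^{sq}f_q\,ds$. For $h\ge0$: $\mathcal E_hu_0:=\sup_{q\in\mathcal P}S_q(h)u_0$. $P$ is the set of finite subsets $\pi\subset[0,\infty)$ with $0\in\pi$; $P_t:=\{\pi\in P:\max\pi=t\}$. For $\pi=\{t_0,\dots,t_m\}$ with $0=t_0<\dots<t_m$, $m\ge1$, $\mathcal E_\pi:=\mathcal E_{t_1-t_0}\circ\cdots\circ\mathcal E_{t_m-t_{m-1}}$,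 and $\mathcal E_{\{0\}}:=\mathcal E_0$. The Nisio semigroup of $(\mathcal P,f)$ is $\mathscr S(t)u_0:=\sup_{\pi\in P_t}\mathcal E_\pi u_0$. *)

theory Defs
  imports "HOL-Analysis.Analysis"
begin

text \<open>Dimension d is the finite index type 'n; vectors are real^'n, matrices real^'n^'n.
  Suprema of vectors are taken componentwise.\<close>

definition Q_matrix :: "real^'n^'n \<Rightarrow> bool" where
  "Q_matrix q \<longleftrightarrow> (\<forall>i. q$i$i \<le> 0) \<and> (\<forall>i j. i \<noteq> j \<longrightarrow> q$i$j \<ge> 0)
      \<and> (\<forall>i. (\<Sum>j\<in>UNIV. q$i$j) = 0)"

primrec mpow :: "real^'n^'n \<Rightarrow> nat \<Rightarrow> real^'n^'n" where
  "mpow q 0 = mat 1"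
| "mpow q (Suc k) = q ** mpow q k"

text \<open>Matrix exponential e^A (with matrix product, not the componentwise one).\<close>
definition mexp :: "real^'n^'n \<Rightarrow> real^'n^'n" where
  "mexp A = (\<Sum>k. (1 / fact k) *\<^sub>R mpow A k)"

definition vSup :: "'a set \<Rightarrow> ('a \<Rightarrow> real^'n) \<Rightarrow> real^'n" where
  "vSup A g = (\<chi> i. (SUP a\<in>A. g a $ i))"

definition Qop :: "(real^'n^'n) set \<Rightarrow> (real^'n^'n \<Rightarrow> real^'n) \<Rightarrow> real^'n \<Rightarrow> real^'n" where
  "Qop P f u = vSup P (\<lambda>q. q *v u + f q)"

definition Sq :: "(real^'n^'n \<Rightarrow> real^'n) \<Rightarrow> real^'n^'n \<Rightarrow> real \<Rightarrow> real^'n \<Rightarrow> real^'n" where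
  "Sq f q t u0 = mexp (t *\<^sub>R q) *v u0 + integral {0..t} (\<lambda>s. mexp (s *\<^sub>R q) *v f q)"

definition Eop :: "(real^'n^'n) set \<Rightarrow> (real^'n^'n \<Rightarrow> real^'n) \<Rightarrow> real \<Rightarrow> real^'n \<Rightarrow> real^'n" where
  "Eop P f h u0 = vSup P (\<lambda>q. Sq f q h u0)"

definition partitions :: "real \<Rightarrow> real set set" where
  "partitions t = {\<pi>. finite \<pi> \<and> \<pi> \<subseteq> {0..} \<and> 0 \<in> \<pi> \<and> Max \<pi> = t}"

text \<open>For \<pi> = {t0<...<tm}: E_\<pi> = E_{t1-t0} \<circ> ... \<circ> E_{tm-t(m-1)}; E_{{0}} = E_0.\<close>
definition Epi :: "(real^'n^'n) set \<Rightarrow> (real^'n^'n \<Rightarrow> real^'n) \<Rightarrow> real set \<Rightarrow> real^'n \<Rightarrow> real^'n" where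
  "Epi P f \<pi> = (if \<pi> = {0} then Eop P f 0 else
     (let ts = sorted_list_of_set \<pi>;
          hs = map (\<lambda>k. ts!(Suc k) - ts!k) [0..<length ts - 1]
      in foldr (\<lambda>h g. Eop P f h \<circ> g) hs id))"

definition nisio :: "(real^'n^'n) set \<Rightarrow> (real^'n^'n \<Rightarrow> real^'n) \<Rightarrow> real \<Rightarrow> real^'n \<Rightarrow> real^'n" where
  "nisio P f t u0 = vSup (partitions t) (\<lambda>\<pi>. Epi P f \<pi> u0)"

definition classical_solution ::
  "(real^'n^'n) set \<Rightarrow> (real^'n^'n \<Rightarrow> real^'n) \<Rightarrow> real^'n \<Rightarrow> (real \<Rightarrow> real^'n) \<Rightarrow> bool" where
  "classical_solution P f u0 v \<longleftrightarrow>
     (\<exists>v'. continuous_on {0..} v' \<and>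
        (\<forall>t\<ge>0. (v has_vector_derivative v' t) (at t within {0..}) \<and> v' t = Qop P f (v t)))
     \<and> v 0 = u0"

end

theory Submission
  imports Defs
begin

text \<open>The generator \<open>Qop P f\<close> is globally Lipschitz: finiteness of \<open>Qop P f\<close> at the negated unit
  vectors bounds the diagonals, hence all rows, of the \<open>q \<in> P\<close> uniformly. So Picard iteration
  yields a global classical solution \<open>v\<close>. Every Q-matrix obeys a maximum principle (\<open>z' \<le> q z\<close> and
  \<open>z(0) \<le> 0\<close> imply \<open>z \<le> 0\<close>), and comparing \<open>v\<close> with the flows \<open>S\<^sub>q\<close> gives
  \<open>S\<^sub>q(h) v(s) \<le> v(s + h)\<close>, hence \<open>E\<^sub>\<pi> u\<^sub>0 \<le> v(t)\<close> for every partition \<open>\<pi>\<close> of \<open>[0, t]\<close>.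
  Conversely, second-order Taylor bounds for \<open>v\<close> and for \<open>S\<^sub>q\<close> with \<open>q\<close> nearly optimal give
  \<open>v(t) \<le> (E\<^sub>t\<^sub>/\<^sub>n)\<^sup>n u\<^sub>0 + D t\<^sup>2 / n\<close>. Thus the Nisio semigroup is \<open>v\<close>, whatever classical solution
  \<open>v\<close> was chosen, which also gives uniqueness.\<close>

section \<open>The flow of a Q-matrix with constant forcing\<close>

definition entry_norm :: "real^'n^'n \<Rightarrow> real" where
  "entry_norm A = (\<Sum>i\<in>UNIV. \<Sum>j\<in>UNIV. \<bar>A$i$j\<bar>)"

lemma entry_norm_nonneg: "0 \<le> entry_norm A"
  unfolding entry_norm_def by (intro sum_nonneg) auto

lemma row_abs_sum_le_entry_norm: "(\<Sum>j\<in>UNIV. \<bar>A$i$j\<bar>) \<le> entry_norm A"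
  unfolding entry_norm_def by (rule member_le_sum) (auto intro: sum_nonneg)

lemma norm_le_entry_norm: "norm A \<le> entry_norm A"
proof -
  have "norm A \<le> (\<Sum>i\<in>UNIV. norm (A$i))"
    unfolding norm_vec_def by (rule L2_set_le_sum) auto
  also have "\<dots> \<le> entry_norm A"
    unfolding entry_norm_def by (intro sum_mono norm_le_l1_cart)
  finally show ?thesis .
qed

lemma abs_mpow_nth_le: "\<bar>mpow A k $ i $ j\<bar> \<le> entry_norm A ^ k"
proof (induction k arbitrary: i j)
  case 0
  then show ?case by (simp add: mat_def)
next
  case (Suc k)
  have "\<bar>mpow A (Suc k) $ i $ j\<bar> = \<bar>\<Sum>l\<in>UNIV. A$i$l * mpow A k $ l $ j\<bar>"
    by (simp add: matrix_matrix_mult_def)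
  also have "\<dots> \<le> (\<Sum>l\<in>UNIV. \<bar>A$i$l\<bar>) * entry_norm A ^ k"
    by (rule order_trans[OF sum_abs])
      (auto intro!: sum_mono mult_left_mono simp: abs_mult Suc sum_distrib_right)
  also have "\<dots> \<le> entry_norm A * entry_norm A ^ k"
    by (rule mult_right_mono[OF row_abs_sum_le_entry_norm]) (simp add: entry_norm_nonneg)
  finally show ?case by simp
qed

lemma abs_mpow_mult_vec_nth_le:
  "\<bar>(mpow A k *v w) $ i\<bar> \<le> entry_norm A ^ k * (\<Sum>j\<in>UNIV. \<bar>w$j\<bar>)"
proof -
  have "\<bar>(mpow A k *v w) $ i\<bar> = \<bar>\<Sum>j\<in>UNIV. mpow A k $ i $ j * w $ j\<bar>"
    by (simp add: matrix_vector_mult_def)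
  also have "\<dots> \<le> (\<Sum>j\<in>UNIV. entry_norm A ^ k * \<bar>w $ j\<bar>)"
    by (rule order_trans[OF sum_abs])
      (auto intro!: sum_mono mult_right_mono simp: abs_mult abs_mpow_nth_le)
  finally show ?thesis by (simp add: sum_distrib_left)
qed

lemma mpow_scaleR: "mpow (t *\<^sub>R A) k = t^k *\<^sub>R mpow A k"
  by (induction k) (auto simp: matrix_matrix_mult_def vec_eq_iff sum_distrib_left mult_ac)

lemma entry_norm_mpow_le:
  fixes A :: "real^'n^'n"
  shows "entry_norm (mpow A k) \<le> real (CARD('n) * CARD('n)) * entry_norm A ^ k"
proof -
  have "entry_norm (mpow A k) \<le> (\<Sum>i\<in>(UNIV::'n set). \<Sum>j\<in>(UNIV::'n set). entry_norm A ^ k)"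
    unfolding entry_norm_def[of "mpow A k"] by (intro sum_mono abs_mpow_nth_le)
  then show ?thesis by simp
qed

lemma summable_mexp_series:
  fixes A :: "real^'n^'n"
  shows "summable (\<lambda>k. (1 / fact k) *\<^sub>R mpow A k)"
proof (rule summable_comparison_test')
  show "summable (\<lambda>k. real (CARD('n) * CARD('n)) * (inverse (fact k) * entry_norm A ^ k))"
    by (intro summable_mult summable_exp)
  fix k :: nat
  have "norm ((1 / fact k) *\<^sub>R mpow A k) \<le> (1 / fact k) * entry_norm (mpow A k)"
    by (simp add: norm_le_entry_norm divide_right_mono)
  also have "\<dots> \<le> (1 / fact k) * (real (CARD('n) * CARD('n)) * entry_norm A ^ k)"
    by (intro mult_left_mono entry_norm_mpow_le) auto
  finally show "norm ((1 / fact k) *\<^sub>R mpow A k)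
      \<le> real (CARD('n) * CARD('n)) * (inverse (fact k) * entry_norm A ^ k)"
    by (simp add: field_simps)
qed

lemma summable_mpow_mult_vec_series: "summable (\<lambda>k. ((mpow A k *v w) $ i / fact k) * t ^ k)"
proof (rule summable_comparison_test')
  show "summable (\<lambda>k. (\<Sum>j\<in>UNIV. \<bar>w$j\<bar>) * (inverse (fact k) * (entry_norm A * \<bar>t\<bar>) ^ k))"
    by (intro summable_mult summable_exp)
  fix k :: nat
  have "norm (((mpow A k *v w) $ i / fact k) * t ^ k)
      = \<bar>(mpow A k *v w) $ i\<bar> * \<bar>t\<bar>^k / fact k"
    by (simp add: abs_mult power_abs)
  also have "\<dots> \<le> (entry_norm A ^ k * (\<Sum>j\<in>UNIV. \<bar>w$j\<bar>)) * \<bar>t\<bar>^k / fact k"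
    by (intro divide_right_mono mult_right_mono abs_mpow_mult_vec_nth_le) auto
  finally show "norm (((mpow A k *v w) $ i / fact k) * t ^ k)
      \<le> (\<Sum>j\<in>UNIV. \<bar>w$j\<bar>) * (inverse (fact k) * (entry_norm A * \<bar>t\<bar>) ^ k)"
    by (simp add: field_simps)
qed

lemma mexp_nth_sums: "(\<lambda>k. (1/fact k) * mpow A k $ i $ j) sums (mexp A $ i $ j)"
proof -
  have "(\<lambda>k. (1/fact k) *\<^sub>R mpow A k) sums mexp A"
    unfolding mexp_def by (rule summable_sums[OF summable_mexp_series])
  from bounded_linear.sums[OF bounded_linear_vec_nth this, of i]
  have "(\<lambda>k. ((1/fact k) *\<^sub>R mpow A k) $ i) sums (mexp A $ i)" .
  from bounded_linear.sums[OF bounded_linear_vec_nth this, of j] show ?thesis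
    by simp
qed

lemma mexp_scaleR_mult_vec_nth:
  "(mexp (t *\<^sub>R A) *v w) $ i = (\<Sum>k. ((mpow A k *v w) $ i / fact k) * t ^ k)"
proof -
  have sums: "(\<lambda>k. (1/fact k) * mpow (t *\<^sub>R A) k $ i $ j * w $ j) sums (mexp (t *\<^sub>R A) $ i $ j * w $ j)"
    for j by (rule sums_mult2[OF mexp_nth_sums])
  have "(mexp (t *\<^sub>R A) *v w) $ i = (\<Sum>j\<in>UNIV. mexp (t *\<^sub>R A) $ i $ j * w $ j)"
    by (simp add: matrix_vector_mult_def)
  also have "\<dots> = (\<Sum>k. \<Sum>j\<in>UNIV. (1/fact k) * mpow (t *\<^sub>R A) k $ i $ j * w $ j)"
    by (rule sums_unique[OF sums_sum[OF sums]])
  also have "\<dots> = (\<Sum>k. ((mpow A k *v w) $ i / fact k) * t ^ k)"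
    by (intro suminf_cong) (simp add: mpow_scaleR matrix_vector_mult_def sum_distrib_left
        sum_divide_distrib sum_distrib_right mult_ac)
  finally show ?thesis .
qed

lemma has_real_derivative_mexp_mult_vec_nth:
  "((\<lambda>t. (mexp (t *\<^sub>R A) *v w) $ i) has_real_derivative (A *v (mexp (t *\<^sub>R A) *v w)) $ i) (at t)"
proof -
  define c where "c j k = (mpow A k *v w) $ j / fact k" for j k
  have series: "(\<lambda>t. (mexp (t *\<^sub>R A) *v w) $ j) = (\<lambda>t. \<Sum>k. c j k * t ^ k)" for j
    by (simp add: mexp_scaleR_mult_vec_nth c_def)
  have summable: "summable (\<lambda>k. c j k * y ^ k)" for j y
    unfolding c_def by (rule summable_mpow_mult_vec_series)
  have "((\<lambda>t. \<Sum>k. c i k * t ^ k) has_real_derivative (\<Sum>k. diffs (c i) k * t ^ k)) (at t)"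
    by (rule termdiffs_strong_converges_everywhere) (rule summable)
  moreover have "diffs (c j) k = (A *v (mpow A k *v w)) $ j / fact k" for j k
    by (simp add: diffs_def c_def matrix_vector_mul_assoc del: of_nat_Suc)
  then have "(\<Sum>k. diffs (c i) k * t ^ k) = (\<Sum>k. \<Sum>j\<in>UNIV. A $ i $ j * (c j k * t ^ k))"
    by (intro suminf_cong) (simp add: c_def matrix_vector_mult_def sum_distrib_left
        sum_divide_distrib sum_distrib_right mult_ac)
  also have "\<dots> = (\<Sum>j\<in>UNIV. \<Sum>k. A $ i $ j * (c j k * t ^ k))"
    by (rule suminf_sum) (intro summable_mult summable)
  also have "\<dots> = (\<Sum>j\<in>UNIV. A $ i $ j * (\<Sum>k. c j k * t ^ k))"
    by (intro sum.cong refl suminf_mult summable)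
  also have "\<dots> = (\<Sum>j\<in>UNIV. A $ i $ j * (mexp (t *\<^sub>R A) *v w) $ j)"
    by (simp add: mexp_scaleR_mult_vec_nth c_def)
  also have "\<dots> = (A *v (mexp (t *\<^sub>R A) *v w)) $ i"
    by (simp add: matrix_vector_mult_def)
  ultimately show ?thesis using series[of i] by simp
qed

lemma has_vector_derivative_componentwise:
  fixes g :: "real \<Rightarrow> real^'n"
  assumes "\<And>i. ((\<lambda>t. g t $ i) has_real_derivative g' $ i) (at t within S)"
  shows "(g has_vector_derivative g') (at t within S)"
proof -
  have expand: "x = (\<Sum>i\<in>UNIV. (x $ i) *\<^sub>R axis i 1)" for x :: "real^'n"
    using basis_expansion[of x] by (simp add: scalar_mult_eq_scaleR)
  define h :: "real \<Rightarrow> real^'n" where "h t = (\<Sum>i\<in>UNIV. (g t $ i) *\<^sub>R axis i 1)" for t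
  define h' :: "real^'n" where "h' = (\<Sum>i\<in>UNIV. (g' $ i) *\<^sub>R axis i 1)"
  have "((\<lambda>t. (g t $ i) *\<^sub>R axis i 1) has_vector_derivative (g' $ i) *\<^sub>R axis i 1) (at t within S)"
    for i using has_vector_derivative_scaleR[OF assms[of i] has_vector_derivative_const] by simp
  then have "(h has_vector_derivative h') (at t within S)"
    unfolding h_def h'_def by (intro has_vector_derivative_sum)
  moreover have "h = g" unfolding h_def by (rule ext, rule expand[symmetric])
  moreover have "h' = g'" unfolding h'_def by (rule expand[symmetric])
  ultimately show ?thesis by simp
qed

lemma has_vector_derivative_mexp_mult_vec:
  "((\<lambda>t. mexp (t *\<^sub>R A) *v w) has_vector_derivative A *v (mexp (t *\<^sub>R A) *v w)) (at t within S)"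
  by (rule has_vector_derivative_componentwise, rule has_field_derivative_at_within,
      rule has_real_derivative_mexp_mult_vec_nth)

lemma continuous_on_mexp_mult_vec: "continuous_on S (\<lambda>t. mexp (t *\<^sub>R A) *v w)"
  by (rule continuous_at_imp_continuous_on, rule ballI, rule has_vector_derivative_continuous,
      rule has_vector_derivative_mexp_mult_vec)

lemma mexp_zero_mult_vec: "mexp 0 *v w = w"
proof -
  have "(mexp 0 *v w) $ i = w $ i" for i
    using mexp_scaleR_mult_vec_nth[of 0 A w i] powser_zero[of "\<lambda>k. (mpow A k *v w) $ i / fact k"]
    by simp
  then show ?thesis by (simp add: vec_eq_iff)
qed

lemma mexp_mult_vec_eq_integral:
  assumes "0 \<le> t"
  shows "mexp (t *\<^sub>R A) *v w = w + A *v integral {0..t} (\<lambda>s. mexp (s *\<^sub>R A) *v w)"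
proof -
  let ?g = "\<lambda>s. mexp (s *\<^sub>R A) *v w"
  have "((\<lambda>s. A *v ?g s) has_integral (?g t - ?g 0)) {0..t}"
    using assms by (intro fundamental_theorem_of_calculus has_vector_derivative_mexp_mult_vec)
  then have "integral {0..t} ((\<lambda>x. A *v x) \<circ> ?g) = ?g t - ?g 0"
    by (simp add: o_def integral_unique)
  moreover have "integral {0..t} ((\<lambda>x. A *v x) \<circ> ?g) = A *v integral {0..t} ?g"
    by (intro integral_linear integrable_continuous_interval continuous_on_mexp_mult_vec) auto
  ultimately show ?thesis by (simp add: mexp_zero_mult_vec)
qed

lemma has_vector_derivative_within_atLeast:
  assumes "(g has_vector_derivative D) (at t within {0..b})" "0 \<le> t" "t < b"
  shows "(g has_vector_derivative D) (at t within {0..})"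
proof -
  have "at t within {0..b} = at t within {0..}"
    by (rule at_within_nhd[where S="{..<b}"]) (use assms in auto)
  then show ?thesis using assms(1) by simp
qed

lemma Sq_0: "Sq f q 0 w = w"
  by (simp add: Sq_def mexp_zero_mult_vec)

lemma has_vector_derivative_Sq:
  assumes "0 \<le> t"
  shows "((\<lambda>t. Sq f q t w) has_vector_derivative q *v Sq f q t w + f q) (at t within {0..})"
proof -
  let ?g = "\<lambda>s. mexp (s *\<^sub>R q) *v f q"
  have "((\<lambda>u. integral {0..u} ?g) has_vector_derivative ?g t) (at t within {0..t+1})"
    using assms by (intro integral_has_vector_derivative continuous_on_mexp_mult_vec) auto
  then have "((\<lambda>u. integral {0..u} ?g) has_vector_derivative ?g t) (at t within {0..})"
    by (rule has_vector_derivative_within_atLeast) (use assms in auto)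
  then have "((\<lambda>t. Sq f q t w) has_vector_derivative q *v (mexp (t *\<^sub>R q) *v w) + ?g t)
      (at t within {0..})"
    unfolding Sq_def by (intro has_vector_derivative_add has_vector_derivative_mexp_mult_vec)
  also have "q *v (mexp (t *\<^sub>R q) *v w) + ?g t = q *v Sq f q t w + f q"
    using mexp_mult_vec_eq_integral[OF assms, of q "f q"] by (simp add: Sq_def algebra_simps)
  finally show ?thesis .
qed

section \<open>A maximum principle and comparison for Q-matrices\<close>

lemma has_real_derivative_vec_nth:
  fixes z :: "real \<Rightarrow> real^'n"
  assumes "(z has_vector_derivative D) (at t within S)"
  shows "((\<lambda>t. z t $ i) has_real_derivative D $ i) (at t within S)"
  using bounded_linear.has_vector_derivative[OF bounded_linear_vec_nth assms, of i]
  by (simp add: has_real_derivative_iff_has_vector_derivative)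

text \<open>At the first time some component reaches \<open>0\<close>, a maximal component is decreasing, so it
  was already positive just before.\<close>

lemma max_principle_strict:
  fixes y :: "real \<Rightarrow> real^'n"
  assumes deriv: "\<And>t. t \<in> {0..b} \<Longrightarrow> (y has_vector_derivative y' t) (at t within {0..b})"
    and start: "\<And>i. y 0 $ i < 0"
    and max_decr: "\<And>t i. t \<in> {0..b} \<Longrightarrow> (\<forall>j. y t $ j \<le> y t $ i) \<Longrightarrow> 0 \<le> y t $ i \<Longrightarrow> y' t $ i < 0"
    and t: "t \<in> {0..b}"
  shows "y t $ i < 0"
proof (rule ccontr)
  define S where "S = {0..b} \<inter> y -` (\<Union>i. {x. 0 \<le> x $ i})"
  assume "\<not> y t $ i < 0"
  then have "t \<in> S" using t by (force simp: S_def not_less)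
  have "continuous_on {0..b} y"
    using deriv has_vector_derivative_continuous continuous_on_eq_continuous_within by blast
  then have "closed S"
    unfolding S_def by (intro continuous_closed_preimage closed_UN) (auto intro: closed_halfspace_component_ge_cart)
  moreover have bdd: "bdd_below S" by (rule bdd_belowI[of _ 0]) (auto simp: S_def)
  ultimately have "Inf S \<in> S" using \<open>t \<in> S\<close> closed_contains_Inf by blast
  define \<tau> where "\<tau> = Inf S"
  obtain k where \<tau>: "\<tau> \<in> {0..b}" "0 \<le> y \<tau> $ k" using \<open>Inf S \<in> S\<close> by (auto simp: S_def \<tau>_def)
  have first: "y s $ j < 0" if "0 \<le> s" "s < \<tau>" for s j
  proof (rule ccontr)
    assume "\<not> y s $ j < 0"
    then have "s \<in> S" using that \<tau> by (force simp: S_def not_less)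
    then show False using cInf_lower[OF _ bdd] that by (fastforce simp: \<tau>_def)
  qed
  have "\<tau> \<noteq> 0" using \<tau> start[of k] by auto
  obtain m where m: "\<forall>j. y \<tau> $ j \<le> y \<tau> $ m"
    using Max_ge[of "range (\<lambda>j. y \<tau> $ j)"] Max_in[of "range (\<lambda>j. y \<tau> $ j)"] by fastforce
  then have "0 \<le> y \<tau> $ m" using \<tau>(2) order_trans by blast
  then have "y' \<tau> $ m < 0" using max_decr[OF \<tau>(1) m] by blast
  from has_real_derivative_neg_dec_left[OF has_real_derivative_vec_nth[OF deriv[OF \<tau>(1)]] this]
  obtain d where "d > 0" and d: "\<And>h. h > 0 \<Longrightarrow> \<tau> - h \<in> {0..b} \<Longrightarrow> h < d \<Longrightarrow> y \<tau> $ m < y (\<tau> - h) $ m"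
    by blast
  define h where "h = min d \<tau> / 2"
  have "h > 0" "h < d" "\<tau> - h \<in> {0..b}" using \<open>d > 0\<close> \<open>\<tau> \<noteq> 0\<close> \<tau>(1) by (auto simp: h_def)
  then have "0 < y (\<tau> - h) $ m" using d \<open>0 \<le> y \<tau> $ m\<close> by fastforce
  moreover have "y (\<tau> - h) $ m < 0" using first \<open>h > 0\<close> \<open>\<tau> - h \<in> {0..b}\<close> by auto
  ultimately show False by simp
qed

text \<open>Apply the strict form to \<open>z s - \<epsilon> (s + 1)\<close>, with \<open>\<epsilon>\<close> chosen so that this vanishes at the
  given \<open>t\<close>; subtracting a constant vector does not change which component is maximal.\<close>

lemma max_principle:
  fixes z :: "real \<Rightarrow> real^'n"
  assumes deriv: "\<And>t. t \<in> {0..b} \<Longrightarrow> (z has_vector_derivative z' t) (at t within {0..b})"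
    and start: "\<And>i. z 0 $ i \<le> 0"
    and max_decr: "\<And>t i. t \<in> {0..b} \<Longrightarrow> (\<forall>j. z t $ j \<le> z t $ i) \<Longrightarrow> 0 < z t $ i \<Longrightarrow> z' t $ i \<le> 0"
    and t: "t \<in> {0..b}"
  shows "z t $ i \<le> 0"
proof (rule ccontr)
  assume "\<not> z t $ i \<le> 0"
  define e where "e = z t $ i / (t + 1)"
  have "e > 0" using \<open>\<not> z t $ i \<le> 0\<close> t by (simp add: e_def)
  define y where "y s = z s - (e * (s + 1)) *\<^sub>R 1" for s
  have y_nth: "y s $ j = z s $ j - e * (s + 1)" for s j by (simp add: y_def)
  have "y t $ i < 0"
  proof (rule max_principle_strict[where y' = "\<lambda>s. z' s - e *\<^sub>R 1", OF _ _ _ t])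
    fix s assume "s \<in> {0..b}"
    then show "(y has_vector_derivative z' s - e *\<^sub>R 1) (at s within {0..b})"
      unfolding y_def by (auto intro!: derivative_eq_intros deriv)
  next
    fix j show "y 0 $ j < 0" using start[of j] \<open>e > 0\<close> by (simp add: y_nth)
  next
    fix s m assume s: "s \<in> {0..b}" and "\<forall>j. y s $ j \<le> y s $ m" "0 \<le> y s $ m"
    moreover have "0 < e * (s + 1)" using \<open>e > 0\<close> s by simp
    ultimately have "\<forall>j. z s $ j \<le> z s $ m" "0 < z s $ m" by (auto simp: y_nth)
    then show "(z' s - e *\<^sub>R 1) $ m < 0" using max_decr[OF s] \<open>e > 0\<close> by fastforce
  qed
  then show False using t by (simp add: y_nth e_def)
qed

lemma Q_matrix_mult_vec_nth_at_max:
  assumes q: "Q_matrix q" and max: "\<forall>j. x$j \<le> x$i"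
  shows "(q *v x) $ i \<le> 0"
proof -
  have "(q *v x) $ i = (\<Sum>j\<in>UNIV. q$i$j * x$j) - (\<Sum>j\<in>UNIV. q$i$j) * x$i"
    using q by (simp add: Q_matrix_def matrix_vector_mult_def)
  also have "\<dots> = (\<Sum>j\<in>UNIV. q$i$j * (x$j - x$i))"
    by (simp add: sum_distrib_right sum_subtractf right_diff_distrib)
  also have "\<dots> \<le> 0"
  proof (rule sum_nonpos)
    fix j
    show "q$i$j * (x$j - x$i) \<le> 0"
      using q max[rule_format, of j] by (cases "j = i") (auto simp: Q_matrix_def mult_nonneg_nonpos)
  qed
  finally show ?thesis .
qed

lemma Q_matrix_mult_vec_const: "Q_matrix q \<Longrightarrow> q *v vec c = 0"
  by (simp add: Q_matrix_def matrix_vector_mult_def vec_eq_iff sum_distrib_right[symmetric])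

lemma Q_matrix_mult_vec_one: "Q_matrix q \<Longrightarrow> q *v 1 = 0"
  using Q_matrix_mult_vec_const[of q 1] by simp

lemma Q_matrix_row_abs_sum:
  assumes q: "Q_matrix q"
  shows "(\<Sum>l\<in>UNIV. \<bar>q$j$l\<bar>) = -2 * q$j$j"
proof -
  have "(\<Sum>l\<in>UNIV. \<bar>q$j$l\<bar>) = \<bar>q$j$j\<bar> + (\<Sum>l\<in>UNIV-{j}. \<bar>q$j$l\<bar>)"
    by (rule sum.remove) auto
  also have "(\<Sum>l\<in>UNIV-{j}. \<bar>q$j$l\<bar>) = (\<Sum>l\<in>UNIV-{j}. q$j$l)"
    using q by (intro sum.cong) (auto simp: Q_matrix_def)
  also have "\<bar>q$j$j\<bar> = - q$j$j" using q by (simp add: Q_matrix_def)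
  moreover have "0 = q$j$j + (\<Sum>l\<in>UNIV-{j}. q$j$l)"
    using q sum.remove[of UNIV j "\<lambda>l. q$j$l"] by (simp add: Q_matrix_def)
  ultimately show ?thesis by linarith
qed

lemma Q_matrix_comparison:
  fixes z :: "real \<Rightarrow> real^'n"
  assumes q: "Q_matrix q"
    and deriv: "\<And>t. t \<in> {0..b} \<Longrightarrow> (z has_vector_derivative z' t) (at t within {0..b})"
    and sub: "\<And>t j. t \<in> {0..b} \<Longrightarrow> z' t $ j \<le> (q *v z t) $ j"
    and start: "\<And>j. z 0 $ j \<le> 0"
    and t: "t \<in> {0..b}"
  shows "z t $ i \<le> 0"
  using deriv start _ t
proof (rule max_principle)
  fix s j assume "s \<in> {0..b}" "\<forall>k. z s $ k \<le> z s $ j"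
  then show "z' s $ j \<le> 0"
    using sub Q_matrix_mult_vec_nth_at_max[OF q] order_trans by blast
qed

lemma has_vector_derivative_shift:
  fixes v :: "real \<Rightarrow> real^'n"
  assumes "(v has_vector_derivative D) (at (s + r) within {0..})" "0 \<le> s"
  shows "((\<lambda>r. v (s + r)) has_vector_derivative D) (at r within {0..h})"
proof -
  have "((\<lambda>r. s + r) has_vector_derivative 1) (at r within {0..h})"
    by (auto intro!: derivative_eq_intros)
  moreover have "(v has_vector_derivative D) (at (s + r) within (\<lambda>r. s + r) ` {0..h})"
    by (rule has_vector_derivative_within_subset[OF assms(1)]) (use assms(2) in auto)
  ultimately have "((v \<circ> (\<lambda>r. s + r)) has_vector_derivative 1 *\<^sub>R D) (at r within {0..h})"
    by (rule vector_diff_chain_within)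
  then show ?thesis by (simp add: o_def)
qed

section \<open>Global existence for Lipschitz autonomous equations\<close>

lemma has_integral_power_0:
  assumes "0 \<le> t"
  shows "((\<lambda>s. s^k) has_integral t^Suc k / Suc k) {0..t}"
proof -
  have "((\<lambda>s. s^Suc k / Suc k) has_real_derivative s^k) (at s within {0..t})" for s :: real
    using DERIV_cdivide[OF DERIV_pow[of "Suc k" s], of "Suc k"]
    by (simp add: has_field_derivative_at_within del: of_nat_Suc)
  then have "((\<lambda>s. s^k) has_integral (t^Suc k / Suc k - 0^Suc k / Suc k)) {0..t}"
    using assms by (intro fundamental_theorem_of_calculus)
      (auto simp: has_real_derivative_iff_has_vector_derivative)
  then show ?thesis by simp
qed

locale lipschitz_autonomous_ode =
  fixes F :: "'a::banach \<Rightarrow> 'a" and L :: real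
  assumes lipschitz: "L-lipschitz_on UNIV F"
begin

primrec picard_iter :: "'a \<Rightarrow> nat \<Rightarrow> real \<Rightarrow> 'a" where
  "picard_iter u0 0 = (\<lambda>t. u0)"
| "picard_iter u0 (Suc n) = (\<lambda>t. u0 + integral {0..t} (\<lambda>s. F (picard_iter u0 n s)))"

definition picard_limit :: "'a \<Rightarrow> real \<Rightarrow> 'a" where
  "picard_limit u0 t = u0 + (\<Sum>n. picard_iter u0 (Suc n) t - picard_iter u0 n t)"

lemma L_nonneg: "0 \<le> L"
  using lipschitz by (rule lipschitz_on_nonneg)

lemma norm_F_diff_le: "norm (F a - F b) \<le> L * norm (a - b)"
  using lipschitz by (rule lipschitz_on_normD) auto

lemma continuous_on_F: "continuous_on S F"
  using continuous_on_subset[OF lipschitz_on_continuous_on[OF lipschitz]] by blast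

lemma continuous_on_picard_iter: "continuous_on {0..T} (picard_iter u0 n)"
proof (induction n)
  case 0
  then show ?case by simp
next
  case (Suc n)
  have "(\<lambda>s. F (picard_iter u0 n s)) integrable_on {0..T}"
    by (intro integrable_continuous_interval continuous_on_compose2[OF continuous_on_F Suc]) auto
  then show ?case
    unfolding picard_iter.simps
    by (intro continuous_on_add continuous_on_const indefinite_integral_continuous_1)
qed

lemma integrable_F_comp:
  fixes v :: "real \<Rightarrow> 'a"
  shows "continuous_on {0..t} v \<Longrightarrow> (\<lambda>s. F (v s)) integrable_on {0..t}"
  by (intro integrable_continuous_interval continuous_on_compose2[OF continuous_on_F]) auto

lemma norm_picard_iter_diff_le:
  assumes "0 \<le> t"
  shows "norm (picard_iter u0 (Suc n) t - picard_iter u0 n t)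
    \<le> norm (F u0) * L^n * t^Suc n / fact (Suc n)"
  using assms
proof (induction n arbitrary: t)
  case 0
  then show ?case by simp
next
  case (Suc n)
  let ?p = "picard_iter u0" and ?c = "norm (F u0) * L^n / fact (Suc n)"
  have "?p (Suc (Suc n)) t - ?p (Suc n) t = integral {0..t} (\<lambda>s. F (?p (Suc n) s) - F (?p n s))"
    using integral_diff[OF integrable_F_comp[OF continuous_on_picard_iter[of t u0 "Suc n"]]
        integrable_F_comp[OF continuous_on_picard_iter[of t u0 n]]] by simp
  also have "norm \<dots> \<le> integral {0..t} (\<lambda>s. L * ?c * s^Suc n)"
  proof (rule integral_norm_bound_integral)
    show "(\<lambda>s. F (?p (Suc n) s) - F (?p n s)) integrable_on {0..t}"
      by (intro integrable_diff integrable_F_comp continuous_on_picard_iter)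
    show "(\<lambda>s. L * ?c * s^Suc n) integrable_on {0..t}"
      by (intro integrable_continuous_interval continuous_intros)
    fix s assume s: "s \<in> {0..t}"
    have "norm (F (?p (Suc n) s) - F (?p n s)) \<le> L * norm (?p (Suc n) s - ?p n s)"
      by (rule norm_F_diff_le)
    also have "\<dots> \<le> L * (?c * s^Suc n)"
      using s Suc.IH[of s] by (intro mult_left_mono L_nonneg) (auto simp: field_simps)
    finally show "norm (F (?p (Suc n) s) - F (?p n s)) \<le> L * ?c * s^Suc n"
      by (simp add: mult.assoc)
  qed
  also have "\<dots> = L * ?c * (t^Suc (Suc n) / Suc (Suc n))"
    by (intro integral_unique has_integral_mult_right has_integral_power_0 Suc.prems)
  also have "\<dots> = norm (F u0) * L ^ Suc n * t ^ Suc (Suc n) / fact (Suc (Suc n))"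
    by (simp add: field_simps del: of_nat_Suc)
  finally show ?case .
qed

lemma uniform_limit_picard_iter:
  assumes "0 \<le> T"
  shows "uniform_limit {0..T} (picard_iter u0) (picard_limit u0) sequentially"
proof -
  let ?d = "\<lambda>n t. picard_iter u0 (Suc n) t - picard_iter u0 n t"
  let ?B = "norm (F u0)"
  have "uniform_limit {0..T} (\<lambda>n t. \<Sum>i<n. ?d i t) (\<lambda>t. \<Sum>i. ?d i t) sequentially"
  proof (rule Weierstrass_m_test)
    fix n t assume t: "t \<in> {0..T}"
    have "norm (?d n t) \<le> ?B * L^n * t^Suc n / fact (Suc n)"
      using t by (intro norm_picard_iter_diff_le) auto
    also have "\<dots> \<le> ?B * L^n * T^Suc n / fact (Suc n)"
      using t L_nonneg by (intro divide_right_mono mult_left_mono power_mono) auto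
    finally show "norm (?d n t) \<le> ?B * L^n * T^Suc n / fact (Suc n)" .
  next
    show "summable (\<lambda>n. ?B * L^n * T^Suc n / fact (Suc n))"
    proof (rule summable_comparison_test')
      show "summable (\<lambda>n. (?B * T) * (inverse (fact n) * (L * T)^n))"
        by (intro summable_mult summable_exp)
      fix n :: nat
      have "norm (?B * L^n * T^Suc n / fact (Suc n)) = (?B * T) * ((L*T)^n / fact (Suc n))"
        using L_nonneg assms by (simp add: field_simps)
      also have "\<dots> \<le> (?B * T) * ((L*T)^n / fact n)"
        using L_nonneg assms by (intro mult_left_mono divide_left_mono) (auto simp: fact_mono)
      finally show "norm (?B * L^n * T^Suc n / fact (Suc n)) \<le> (?B * T) * (inverse (fact n) * (L * T)^n)"
        by (simp add: field_simps)
    qed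
  qed
  then have "uniform_limit {0..T} (\<lambda>n t. u0 + (\<Sum>i<n. ?d i t)) (picard_limit u0) sequentially"
    unfolding picard_limit_def by (intro uniform_limit_intros)
  moreover have "u0 + (\<Sum>i<n. ?d i t) = picard_iter u0 n t" for n t
    by (subst sum_lessThan_telescope) simp
  ultimately show ?thesis by simp
qed

lemma continuous_on_picard_limit: "0 \<le> T \<Longrightarrow> continuous_on {0..T} (picard_limit u0)"
  by (rule uniform_limit_theorem[OF always_eventually uniform_limit_picard_iter])
    (auto intro: continuous_on_picard_iter)

lemma picard_limit_eq_integral:
  assumes t: "0 \<le> t"
  shows "picard_limit u0 t = u0 + integral {0..t} (\<lambda>s. F (picard_limit u0 s))"
proof -
  have "uniform_limit {0..t} (\<lambda>n s. F (picard_iter u0 n s)) (F \<circ> picard_limit u0) sequentially"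
    using uniform_limit_picard_iter[OF t] lipschitz_on_uniformly_continuous[OF lipschitz]
    by (rule uniform_limit_compose) auto
  then obtain I J where I: "\<And>n. ((\<lambda>s. F (picard_iter u0 n s)) has_integral I n) {0..t}"
    and J: "((F \<circ> picard_limit u0) has_integral J) {0..t}" and "I \<longlonglongrightarrow> J"
    by (rule uniform_limit_integral)
      (auto intro: continuous_on_compose2[OF continuous_on_F continuous_on_picard_iter])
  then have "(\<lambda>n. picard_iter u0 (Suc n) t) \<longlonglongrightarrow> u0 + J"
    by (auto simp: integral_unique[OF I] intro: tendsto_add)
  moreover have "(\<lambda>n. picard_iter u0 (Suc n) t) \<longlonglongrightarrow> picard_limit u0 t"
    using LIMSEQ_Suc[OF tendsto_uniform_limitI[OF uniform_limit_picard_iter[OF t]]] t by simp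
  ultimately show ?thesis
    using LIMSEQ_unique integral_unique[OF J] by (simp add: o_def)
qed

lemma picard_limit_solves:
  "picard_limit u0 0 = u0"
  "0 \<le> t \<Longrightarrow> (picard_limit u0 has_vector_derivative F (picard_limit u0 t)) (at t within {0..})"
proof -
  show "picard_limit u0 0 = u0" using picard_limit_eq_integral[of 0] by simp
  assume t: "0 \<le> t"
  have integral_form: "((\<lambda>u. u0 + integral {0..u} (\<lambda>s. F (picard_limit u0 s))) has_vector_derivative
      F (picard_limit u0 t)) (at t within {0..t+1})"
    using t by (auto intro!: derivative_eq_intros integral_has_vector_derivative
        continuous_on_compose2[OF continuous_on_F continuous_on_picard_limit])
  have "(picard_limit u0 has_vector_derivative F (picard_limit u0 t)) (at t within {0..t+1})"
    by (rule has_vector_derivative_transform[OF _ _ integral_form]) (use t picard_limit_eq_integral in auto)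
  then show "(picard_limit u0 has_vector_derivative F (picard_limit u0 t)) (at t within {0..})"
    by (rule has_vector_derivative_within_atLeast) (use t in auto)
qed

end

section \<open>The generator of a bounded family of Q-matrices\<close>

locale bounded_Q_family =
  fixes P :: "(real^'n^'n) set" and f :: "real^'n^'n \<Rightarrow> real^'n" and q0 :: "real^'n^'n"
  assumes Q_matrices: "\<forall>q\<in>P. Q_matrix q"
    and q0: "q0 \<in> P" "f q0 = 0"
    and f_nonpos: "\<forall>q\<in>P. \<forall>i. f q $ i \<le> 0"
    and Qop_bdd: "\<forall>u i. bdd_above ((\<lambda>q. (q *v u + f q) $ i) ` P)"
    and f_bdd: "\<exists>C. \<forall>q\<in>P. \<forall>i. \<bar>f q $ i\<bar> \<le> C"
begin

lemma P_nonempty: "P \<noteq> {}"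
  using q0 by auto

lemma Q_matrix_member: "q \<in> P \<Longrightarrow> Q_matrix q"
  using Q_matrices by blast

definition f_bound :: real where
  "f_bound = (SOME C. \<forall>q\<in>P. \<forall>i. \<bar>f q $ i\<bar> \<le> C)"

lemma abs_f_nth_le: "q \<in> P \<Longrightarrow> \<bar>f q $ i\<bar> \<le> f_bound"
  using someI_ex[OF f_bdd] unfolding f_bound_def by blast

lemma row_bound_exists: "\<exists>M. \<forall>q\<in>P. \<forall>i. (\<Sum>j\<in>UNIV. \<bar>q$i$j\<bar>) \<le> M"
proof -
  have "\<exists>B. \<forall>q\<in>P. - q$j$j \<le> B" for j
  proof -
    from Qop_bdd obtain B where B: "\<forall>q\<in>P. (q *v (- axis j 1) + f q) $ j \<le> B"
      unfolding bdd_above_def by blast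
    have "(q *v (- axis j 1)) $ j = - q$j$j" for q :: "real^'n^'n"
      by (simp add: matrix_vector_mult_def axis_def if_distrib cong: if_cong)
    then have "- q$j$j \<le> B + f_bound" if "q \<in> P" for q
      using B that abs_f_nth_le[OF that, of j] by fastforce
    then show ?thesis by blast
  qed
  then obtain B where B: "\<And>j q. q \<in> P \<Longrightarrow> - q$j$j \<le> B j" by metis
  have "(\<Sum>j\<in>UNIV. \<bar>q$i$j\<bar>) \<le> (\<Sum>j\<in>UNIV. 2 * \<bar>B j\<bar>)" if q: "q \<in> P" for q i
  proof -
    have "(\<Sum>j\<in>UNIV. \<bar>q$i$j\<bar>) = -2 * q$i$i"
      using Q_matrix_member[OF q] by (rule Q_matrix_row_abs_sum)
    also have "\<dots> \<le> 2 * \<bar>B i\<bar>" using B[OF q, of i] by linarith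
    also have "\<dots> \<le> (\<Sum>j\<in>UNIV. 2 * \<bar>B j\<bar>)" by (rule member_le_sum) auto
    finally show ?thesis .
  qed
  then show ?thesis by blast
qed

definition row_bound :: real where
  "row_bound = (SOME M. \<forall>q\<in>P. \<forall>i. (\<Sum>j\<in>UNIV. \<bar>q$i$j\<bar>) \<le> M)"

lemma row_abs_sum_le: "q \<in> P \<Longrightarrow> (\<Sum>j\<in>UNIV. \<bar>q$i$j\<bar>) \<le> row_bound"
  using someI_ex[OF row_bound_exists] unfolding row_bound_def by blast

lemma row_bound_nonneg: "0 \<le> row_bound"
  using row_abs_sum_le[OF q0(1)] order_trans sum_nonneg abs_ge_zero by meson

lemma abs_mult_vec_nth_le:
  assumes q: "q \<in> P" and R: "\<forall>j. \<bar>x$j\<bar> \<le> R"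
  shows "\<bar>(q *v x) $ i\<bar> \<le> row_bound * R"
proof -
  have "0 \<le> R" using R abs_ge_zero order_trans by blast
  have "\<bar>(q *v x) $ i\<bar> = \<bar>\<Sum>j\<in>UNIV. q$i$j * x$j\<bar>" by (simp add: matrix_vector_mult_def)
  also have "\<dots> \<le> (\<Sum>j\<in>UNIV. \<bar>q$i$j\<bar>) * R"
    by (rule order_trans[OF sum_abs])
      (auto intro!: sum_mono mult_left_mono simp: abs_mult R sum_distrib_right)
  also have "\<dots> \<le> row_bound * R" by (rule mult_right_mono[OF row_abs_sum_le[OF q] \<open>0 \<le> R\<close>])
  finally show ?thesis .
qed

lemma Qop_nth: "Qop P f w $ i = (SUP q\<in>P. (q *v w + f q) $ i)"
  by (simp add: Qop_def vSup_def)

lemma Qop_nth_ge: "q \<in> P \<Longrightarrow> (q *v w + f q) $ i \<le> Qop P f w $ i"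
  unfolding Qop_nth by (rule cSUP_upper) (use Qop_bdd in auto)

lemma Qop_nth_le: "(\<And>q. q \<in> P \<Longrightarrow> (q *v w + f q) $ i \<le> c) \<Longrightarrow> Qop P f w $ i \<le> c"
  unfolding Qop_nth by (rule cSUP_least[OF P_nonempty])

lemma abs_Qop_nth_le:
  assumes R: "\<forall>j. \<bar>w$j\<bar> \<le> R"
  shows "\<bar>Qop P f w $ i\<bar> \<le> row_bound * R"
proof -
  have "Qop P f w $ i \<le> row_bound * R"
  proof (rule Qop_nth_le)
    fix q assume q: "q \<in> P"
    have "(q *v w) $ i \<le> row_bound * R" using abs_mult_vec_nth_le[OF q R, of i] by simp
    moreover have "f q $ i \<le> 0" using f_nonpos q by blast
    ultimately show "(q *v w + f q) $ i \<le> row_bound * R" by simp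
  qed
  moreover have "- (row_bound * R) \<le> Qop P f w $ i"
    using Qop_nth_ge[OF q0(1), of w i] abs_mult_vec_nth_le[OF q0(1) R, of i] q0(2) by simp
  ultimately show ?thesis by simp
qed

lemma Qop_nth_le_shift:
  assumes "\<And>q. q \<in> P \<Longrightarrow> (q *v (a - b)) $ i \<le> \<delta>"
  shows "Qop P f a $ i \<le> Qop P f b $ i + \<delta>"
proof (rule Qop_nth_le)
  fix q assume q: "q \<in> P"
  have "(q *v a + f q) $ i = (q *v b + f q) $ i + (q *v (a - b)) $ i"
    by (simp add: matrix_vector_mult_diff_distrib)
  also have "\<dots> \<le> Qop P f b $ i + \<delta>" using Qop_nth_ge[OF q] assms[OF q] by (rule add_mono)
  finally show "(q *v a + f q) $ i \<le> Qop P f b $ i + \<delta>" .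
qed

lemma lipschitz_Qop: "(CARD('n) * row_bound)-lipschitz_on UNIV (Qop P f)"
proof (rule lipschitz_onI)
  fix a b :: "real^'n"
  have "\<bar>Qop P f a $ i - Qop P f b $ i\<bar> \<le> row_bound * norm (a - b)" for i
  proof -
    have ab: "\<forall>j. \<bar>(a - b) $ j\<bar> \<le> norm (a - b)" and ba: "\<forall>j. \<bar>(b - a) $ j\<bar> \<le> norm (a - b)"
      using component_le_norm_cart[of "a - b"] component_le_norm_cart[of "b - a"]
      by (simp_all add: norm_minus_commute)
    have "Qop P f a $ i \<le> Qop P f b $ i + row_bound * norm (a - b)"
      by (rule Qop_nth_le_shift, rule abs_le_D1, rule abs_mult_vec_nth_le[OF _ ab])
    moreover have "Qop P f b $ i \<le> Qop P f a $ i + row_bound * norm (a - b)"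
      by (rule Qop_nth_le_shift, rule abs_le_D1, rule abs_mult_vec_nth_le[OF _ ba])
    ultimately show ?thesis by simp
  qed
  then have "norm (Qop P f a - Qop P f b) \<le> (\<Sum>i\<in>(UNIV::'n set). row_bound * norm (a - b))"
    by (intro order_trans[OF norm_le_l1_cart] sum_mono) simp
  then show "dist (Qop P f a) (Qop P f b) \<le> (CARD('n) * row_bound) * dist a b"
    by (simp add: dist_norm)
qed (simp add: row_bound_nonneg)

lemma classical_solution_exists: "\<exists>v. classical_solution P f u0 v"
proof -
  interpret lipschitz_autonomous_ode "Qop P f" "CARD('n) * row_bound"
    by unfold_locales (rule lipschitz_Qop)
  let ?v = "picard_limit u0"
  have "continuous_on {0..} ?v"
    unfolding continuous_on_eq_continuous_within
    using has_vector_derivative_continuous[OF picard_limit_solves(2)] by auto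
  then have "continuous_on {0..} (\<lambda>t. Qop P f (?v t))"
    by (rule continuous_on_compose2[OF continuous_on_F]) auto
  then show ?thesis
    unfolding classical_solution_def using picard_limit_solves by blast
qed

end

section \<open>The one-step operators \<open>S\<^sub>q(h)\<close> and \<open>E\<^sub>h\<close>\<close>

context bounded_Q_family
begin

lemma has_vector_derivative_Sq_within:
  "0 \<le> r \<Longrightarrow> ((\<lambda>r. Sq f q r w) has_vector_derivative q *v Sq f q r w + f q) (at r within {0..h})"
  by (rule has_vector_derivative_within_subset[OF has_vector_derivative_Sq]) auto

lemma Sq_nth_le_const:
  assumes q: "q \<in> P" and h: "0 \<le> h" and c: "\<forall>j. w$j \<le> c"
  shows "Sq f q h w $ i \<le> c"
proof -
  have "(Sq f q h w - vec c) $ i \<le> 0"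
  proof (rule Q_matrix_comparison[OF Q_matrix_member[OF q], where b = h and
        z = "\<lambda>r. Sq f q r w - vec c" and z' = "\<lambda>r. q *v Sq f q r w + f q"])
    show "((\<lambda>r. Sq f q r w - vec c) has_vector_derivative q *v Sq f q r w + f q) (at r within {0..h})"
      if "r \<in> {0..h}" for r
      using that by (auto intro!: derivative_eq_intros has_vector_derivative_Sq_within)
    show "(q *v Sq f q r w + f q) $ j \<le> (q *v (Sq f q r w - vec c)) $ j" for r j
      using f_nonpos q
      by (simp add: matrix_vector_mult_diff_distrib Q_matrix_mult_vec_const[OF Q_matrix_member[OF q]])
  qed (use c h in \<open>auto simp: Sq_0\<close>)
  then show ?thesis by simp
qed

lemma Sq_nth_le_shift:
  assumes q: "q \<in> P" and h: "0 \<le> h" and c: "\<forall>j. w$j \<le> w'$j + c"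
  shows "Sq f q h w $ i \<le> Sq f q h w' $ i + c"
proof -
  have "(Sq f q h w - Sq f q h w' - vec c) $ i \<le> 0"
  proof (rule Q_matrix_comparison[OF Q_matrix_member[OF q], where b = h and
        z = "\<lambda>r. Sq f q r w - Sq f q r w' - vec c" and z' = "\<lambda>r. (q *v Sq f q r w + f q) - (q *v Sq f q r w' + f q)"])
    show "((\<lambda>r. Sq f q r w - Sq f q r w' - vec c) has_vector_derivative
        (q *v Sq f q r w + f q) - (q *v Sq f q r w' + f q)) (at r within {0..h})"
      if "r \<in> {0..h}" for r
      using that by (auto intro!: derivative_eq_intros has_vector_derivative_Sq_within)
    show "((q *v Sq f q r w + f q) - (q *v Sq f q r w' + f q)) $ j
        \<le> (q *v (Sq f q r w - Sq f q r w' - vec c)) $ j" for r j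
      by (simp add: matrix_vector_mult_diff_distrib Q_matrix_mult_vec_const[OF Q_matrix_member[OF q]])
  qed (use c h in \<open>auto simp: Sq_0 algebra_simps\<close>)
  then show ?thesis by simp
qed

text \<open>With \<open>\<bar>q (q w + f\<^sub>q)\<bar> \<le> 2 C\<close>, the curve \<open>w + r (q w + f\<^sub>q) - C r\<^sup>2\<close> is a
  subsolution of \<open>S\<^sub>q\<close>.\<close>

lemma Sq_nth_ge_tangent:
  assumes q: "q \<in> P" and h: "0 \<le> h" and R: "\<forall>j. \<bar>w$j\<bar> \<le> R"
  shows "w$i + h * (q *v w + f q)$i - (row_bound * (row_bound * R + f_bound) / 2) * h^2
    \<le> Sq f q h w $ i"
proof -
  have Qq: "Q_matrix q" using Q_matrix_member[OF q] .
  define a where "a = q *v w + f q"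
  define C where "C = row_bound * (row_bound * R + f_bound) / 2"
  have "\<forall>j. \<bar>a$j\<bar> \<le> row_bound * R + f_bound"
    using abs_mult_vec_nth_le[OF q R] abs_f_nth_le[OF q] abs_triangle_ineq order_trans add_mono
    unfolding a_def vector_add_component by metis
  then have qa: "- (2 * C) \<le> (q *v a) $ k" for k
    using abs_mult_vec_nth_le[OF q, of a "row_bound * R + f_bound" k] by (simp add: C_def abs_le_iff)
  let ?z = "\<lambda>r. w + r *\<^sub>R a - (C * r^2) *\<^sub>R 1 - Sq f q r w"
  have "?z h $ i \<le> 0"
  proof (rule Q_matrix_comparison[OF Qq, where b = h and z = ?z and z' = "\<lambda>r. a - (2 * C * r) *\<^sub>R 1 - (q *v Sq f q r w + f q)"])
    show "(?z has_vector_derivative a - (2 * C * r) *\<^sub>R 1 - (q *v Sq f q r w + f q)) (at r within {0..h})"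
      if "r \<in> {0..h}" for r
      using that by (auto intro!: derivative_eq_intros has_vector_derivative_Sq_within)
    show "(a - (2 * C * r) *\<^sub>R 1 - (q *v Sq f q r w + f q)) $ k \<le> (q *v ?z r) $ k"
      if "r \<in> {0..h}" for r k
    proof -
      have "- (2 * C) * r \<le> r * (q *v a) $ k"
        using mult_left_mono[OF qa[of k], of r] that by (simp add: mult.commute)
      then show ?thesis
        by (simp add: a_def matrix_vector_mult_diff_distrib matrix_vector_right_distrib
            matrix_vector_mult_scaleR Q_matrix_mult_vec_one[OF Qq])
    qed
  qed (use h in \<open>auto simp: Sq_0\<close>)
  then show ?thesis by (simp add: a_def C_def)
qed

lemma Eop_nth: "Eop P f h w $ i = (SUP q\<in>P. Sq f q h w $ i)"
  by (simp add: Eop_def vSup_def)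

lemma Sq_nth_le_Eop_nth:
  assumes "q \<in> P" "0 \<le> h"
  shows "Sq f q h w $ i \<le> Eop P f h w $ i"
proof -
  have "\<forall>j. w$j \<le> norm w" by (meson abs_ge_self component_le_norm_cart order_trans)
  then have "bdd_above ((\<lambda>q. Sq f q h w $ i) ` P)"
    using assms(2) by (intro bdd_aboveI2) (rule Sq_nth_le_const)
  then show ?thesis unfolding Eop_nth by (rule cSUP_upper[OF assms(1)])
qed

lemma Eop_nth_le: "(\<And>q. q \<in> P \<Longrightarrow> Sq f q h w $ i \<le> c) \<Longrightarrow> Eop P f h w $ i \<le> c"
  unfolding Eop_nth by (rule cSUP_least[OF P_nonempty])

lemma Eop_nth_le_shift:
  "0 \<le> h \<Longrightarrow> \<forall>j. w$j \<le> w'$j + c \<Longrightarrow> Eop P f h w $ i \<le> Eop P f h w' $ i + c"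
  by (rule Eop_nth_le) (meson Sq_nth_le_shift Sq_nth_le_Eop_nth add_right_mono order_trans)

lemma Eop_0: "Eop P f 0 w = w"
  by (simp add: vec_eq_iff Eop_nth Sq_0 P_nonempty)

end

section \<open>Classical solutions versus the one-step operators\<close>

context bounded_Q_family
begin

lemma classical_solutionD:
  assumes "classical_solution P f u0 v"
  shows "v 0 = u0"
    and "0 \<le> t \<Longrightarrow> (v has_vector_derivative Qop P f (v t)) (at t within {0..})"
  using assms unfolding classical_solution_def by auto

lemma has_vector_derivative_solution_within:
  "classical_solution P f u0 v \<Longrightarrow> 0 \<le> r
    \<Longrightarrow> (v has_vector_derivative Qop P f (v r)) (at r within {0..t})"
  by (rule has_vector_derivative_within_subset[OF classical_solutionD(2)]) auto

lemma abs_solution_nth_le: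
  assumes sol: "classical_solution P f u0 v" and R: "\<forall>j. \<bar>u0$j\<bar> \<le> R" and t: "0 \<le> t"
  shows "\<bar>v t $ i\<bar> \<le> R"
proof -
  have "(v t - vec R) $ i \<le> 0"
  proof (rule max_principle[where z = "\<lambda>r. v r - vec R" and z' = "\<lambda>r. Qop P f (v r)" and b = t])
    show "((\<lambda>r. v r - vec R) has_vector_derivative Qop P f (v r)) (at r within {0..t})"
      if "r \<in> {0..t}" for r
      using that by (auto intro!: derivative_eq_intros has_vector_derivative_solution_within[OF sol])
    show "Qop P f (v r) $ k \<le> 0" if "\<forall>j. (v r - vec R) $ j \<le> (v r - vec R) $ k" for r k
    proof (rule Qop_nth_le)
      fix q assume q: "q \<in> P"
      have Qq: "Q_matrix q" using Q_matrix_member[OF q] .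
      have "(q *v v r) $ k = (q *v (v r - vec R)) $ k"
        by (simp add: matrix_vector_mult_diff_distrib Q_matrix_mult_vec_const[OF Qq])
      also have "\<dots> \<le> 0" using Q_matrix_mult_vec_nth_at_max[OF Qq that] .
      finally show "(q *v v r + f q) $ k \<le> 0" using f_nonpos q by (simp add: add_nonpos_nonpos)
    qed
  qed (use R t classical_solutionD(1)[OF sol] in \<open>auto simp: abs_le_iff\<close>)
  moreover have "(vec (-R) - v t) $ i \<le> 0"
  proof (rule Q_matrix_comparison[OF Q_matrix_member[OF q0(1)], where b = t
        and z = "\<lambda>r. vec (-R) - v r" and z' = "\<lambda>r. - Qop P f (v r)"])
    show "((\<lambda>r. vec (-R) - v r) has_vector_derivative - Qop P f (v r)) (at r within {0..t})"
      if "r \<in> {0..t}" for r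
      using that by (auto intro!: derivative_eq_intros has_vector_derivative_solution_within[OF sol])
    show "(- Qop P f (v r)) $ k \<le> (q0 *v (vec (-R) - v r)) $ k" for r k
      using Qop_nth_ge[OF q0(1), of "v r" k] q0(2)
      by (simp add: matrix_vector_mult_diff_distrib Q_matrix_mult_vec_const[OF Q_matrix_member[OF q0(1)]])
  qed (use R t classical_solutionD(1)[OF sol] in \<open>auto simp: abs_le_iff minus_le_iff\<close>)
  ultimately show ?thesis by (simp add: abs_le_iff)
qed

lemma Sq_nth_le_solution:
  assumes sol: "classical_solution P f u0 v" and q: "q \<in> P" and s: "0 \<le> s" and h: "0 \<le> h"
  shows "Sq f q h (v s) $ i \<le> v (s + h) $ i"
proof -
  have "(Sq f q h (v s) - v (s + h)) $ i \<le> 0"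
  proof (rule Q_matrix_comparison[OF Q_matrix_member[OF q], where b = h
        and z = "\<lambda>r. Sq f q r (v s) - v (s + r)"
        and z' = "\<lambda>r. (q *v Sq f q r (v s) + f q) - Qop P f (v (s + r))"])
    show "((\<lambda>r. Sq f q r (v s) - v (s + r)) has_vector_derivative
        (q *v Sq f q r (v s) + f q) - Qop P f (v (s + r))) (at r within {0..h})"
      if "r \<in> {0..h}" for r
      using that s by (intro has_vector_derivative_diff has_vector_derivative_Sq_within
          has_vector_derivative_shift classical_solutionD(2)[OF sol]) auto
    show "((q *v Sq f q r (v s) + f q) - Qop P f (v (s + r))) $ k
        \<le> (q *v (Sq f q r (v s) - v (s + r))) $ k" for r k
      using Qop_nth_ge[OF q, of "v (s + r)" k] by (simp add: matrix_vector_mult_diff_distrib)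
  qed (use h in \<open>auto simp: Sq_0\<close>)
  then show ?thesis by simp
qed

lemma solution_nth_le_tangent:
  assumes sol: "classical_solution P f u0 v" and R: "\<forall>j. \<bar>u0$j\<bar> \<le> R"
    and s: "0 \<le> s" and h: "0 \<le> h"
  shows "v (s + h) $ i \<le> v s $ i + h * Qop P f (v s) $ i + (row_bound * (row_bound * R) / 2) * h^2"
proof -
  define a where "a = Qop P f (v s)"
  define C where "C = row_bound * (row_bound * R) / 2"
  have a_bound: "\<forall>j. \<bar>a$j\<bar> \<le> row_bound * R"
    unfolding a_def using abs_Qop_nth_le abs_solution_nth_le[OF sol R s] by blast
  define z where "z r = v (s + r) - v s - r *\<^sub>R a - (C * r^2) *\<^sub>R 1" for r
  have "z h $ i \<le> 0"
  proof (rule max_principle[where z = z and z' = "\<lambda>r. Qop P f (v (s + r)) - a - (2 * C * r) *\<^sub>R 1" and b = h])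
    show "(z has_vector_derivative Qop P f (v (s + r)) - a - (2 * C * r) *\<^sub>R 1) (at r within {0..h})"
      if "r \<in> {0..h}" for r
      unfolding z_def using that s
      by (auto intro!: derivative_eq_intros has_vector_derivative_shift classical_solutionD(2)[OF sol])
    show "(Qop P f (v (s + r)) - a - (2 * C * r) *\<^sub>R 1) $ k \<le> 0"
      if r: "r \<in> {0..h}" and max: "\<forall>j. z r $ j \<le> z r $ k" for r k
    proof -
      have "Qop P f (v (s + r)) $ k \<le> Qop P f (v s) $ k + r * (2 * C)"
      proof (rule Qop_nth_le_shift)
        fix q assume q: "q \<in> P"
        have Qq: "Q_matrix q" using Q_matrix_member[OF q] .
        have "v (s + r) - v s = z r + r *\<^sub>R a + (C * r^2) *\<^sub>R 1" by (simp add: z_def)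
        then have "(q *v (v (s + r) - v s)) $ k = (q *v z r) $ k + r * (q *v a) $ k"
          by (simp add: matrix_vector_right_distrib matrix_vector_mult_scaleR Q_matrix_mult_vec_one[OF Qq])
        moreover have "(q *v z r) $ k \<le> 0" by (rule Q_matrix_mult_vec_nth_at_max[OF Qq max])
        moreover have "r * (q *v a) $ k \<le> r * (2 * C)"
          using abs_mult_vec_nth_le[OF q a_bound, of k] r by (intro mult_left_mono) (auto simp: C_def)
        ultimately show "(q *v (v (s + r) - v s)) $ k \<le> r * (2 * C)" by simp
      qed
      then show ?thesis by (simp add: a_def algebra_simps)
    qed
  qed (use h in \<open>auto simp: z_def\<close>)
  then show ?thesis by (simp add: z_def a_def C_def algebra_simps)
qed

end

section \<open>Partitions\<close>

definition partition_steps :: "real set \<Rightarrow> real list" where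
  "partition_steps \<pi> =
     (let ts = sorted_list_of_set \<pi> in map (\<lambda>k. ts!(Suc k) - ts!k) [0..<length ts - 1])"

lemma Epi_eq_foldr_partition_steps:
  "\<pi> \<noteq> {0} \<Longrightarrow> Epi P f \<pi> = foldr (\<lambda>h g. Eop P f h \<circ> g) (partition_steps \<pi>) id"
  by (simp add: Epi_def partition_steps_def Let_def)

lemma partition_steps_nonneg: "finite \<pi> \<Longrightarrow> h \<in> set (partition_steps \<pi>) \<Longrightarrow> 0 \<le> h"
  by (auto simp: partition_steps_def Let_def intro!: sorted_nth_mono)

lemma sum_list_partition_steps:
  assumes "\<pi> \<in> partitions t"
  shows "sum_list (partition_steps \<pi>) = t"
proof -
  have fin: "finite \<pi>" and pos: "\<pi> \<subseteq> {0..}" and "0 \<in> \<pi>" and "Max \<pi> = t"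
    using assms by (auto simp: partitions_def)
  define ts where "ts = sorted_list_of_set \<pi>"
  define n where "n = length ts"
  have ts: "set ts = \<pi>" "sorted ts" using fin by (auto simp: ts_def)
  then have "0 < n" using \<open>0 \<in> \<pi>\<close> by (auto simp: n_def)
  have "sum_list (partition_steps \<pi>) = (\<Sum>k<n - 1. ts!(Suc k) - ts!k)"
    by (simp add: partition_steps_def Let_def ts_def n_def sum_set_upt_conv_sum_list_nat[symmetric]
        atLeast0LessThan)
  also have "\<dots> = ts!(n - 1) - ts!0" by (rule sum_lessThan_telescope)
  also have "ts!0 = 0"
  proof -
    obtain j where "j < n" "ts!j = 0" using \<open>0 \<in> \<pi>\<close> ts by (metis in_set_conv_nth n_def)
    moreover have "ts!0 \<in> \<pi>" using ts \<open>0 < n\<close> by (metis nth_mem n_def)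
    ultimately show ?thesis using pos sorted_nth_mono[OF ts(2), of 0 j] by (force simp: n_def)
  qed
  also have "ts!(n - 1) = t"
  proof -
    have "t \<in> \<pi>" using \<open>Max \<pi> = t\<close> fin \<open>0 \<in> \<pi>\<close> by (metis Max_in empty_iff)
    then obtain j where "j < n" "ts!j = t" using ts by (metis in_set_conv_nth n_def)
    moreover have "ts!(n - 1) \<in> \<pi>" using ts \<open>0 < n\<close> by (metis nth_mem n_def diff_less zero_less_one)
    moreover have "ts!(n - 1) \<le> t" using \<open>ts!(n - 1) \<in> \<pi>\<close> \<open>Max \<pi> = t\<close> fin by (metis Max_ge)
    moreover have "ts!j \<le> ts!(n - 1)" using ts(2) \<open>j < n\<close> by (intro sorted_nth_mono) (auto simp: n_def)
    ultimately show ?thesis by simp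
  qed
  finally show ?thesis by simp
qed

definition uniform_partition :: "real \<Rightarrow> nat \<Rightarrow> real set" where
  "uniform_partition t n = set (map (\<lambda>k. real k * (t / n)) [0..<Suc n])"

lemma
  assumes t: "0 < t" and n: "0 < n"
  shows uniform_partition_mem: "uniform_partition t n \<in> partitions t"
    and partition_steps_uniform_partition: "partition_steps (uniform_partition t n) = replicate n (t / n)"
proof -
  define xs where "xs = map (\<lambda>k. real k * (t / n)) [0..<Suc n]"
  have "sorted_wrt (<) xs"
    unfolding sorted_wrt_iff_nth_less
  proof (intro allI impI)
    fix i j assume ij: "i < j" "j < length xs"
    then have "xs!i = real i * (t / n)" "xs!j = real j * (t / n)"
      by (simp_all add: xs_def nth_map_upt del: upt_Suc)
    moreover have "real i * (t / n) < real j * (t / n)"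
      using ij(1) t n by (intro mult_strict_right_mono) auto
    ultimately show "xs!i < xs!j" by simp
  qed
  moreover have "uniform_partition t n = set xs" by (simp add: uniform_partition_def xs_def)
  ultimately have "sorted_list_of_set (uniform_partition t n) = xs"
    using sorted_list_of_set_unique[of "set xs" xs] by (simp add: strict_sorted_iff distinct_card)
  moreover have "map (\<lambda>k. xs!(Suc k) - xs!k) [0..<length xs - 1] = map (\<lambda>k. t / n) [0..<n]"
    by (auto simp: xs_def algebra_simps nth_append add_divide_distrib simp del: upt_Suc)
  moreover have "map (\<lambda>k. t / n) [0..<n] = replicate n (t / n)"
    by (simp add: map_replicate_const)
  ultimately show "partition_steps (uniform_partition t n) = replicate n (t / n)"
    by (simp add: partition_steps_def)
  have le: "real k * t / real n \<le> t" if "k \<le> n" for k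
  proof -
    have "real k * (t / n) \<le> real n * (t / n)" using that t by (intro mult_right_mono) auto
    then show ?thesis using n by simp
  qed
  have "Max (uniform_partition t n) = t"
    using t n le by (intro Max_eqI) (auto simp: uniform_partition_def intro!: image_eqI[of _ _ n])
  then show "uniform_partition t n \<in> partitions t"
    using t by (auto simp: partitions_def uniform_partition_def intro!: image_eqI[of 0])
qed

lemma foldr_comp_replicate: "foldr (\<lambda>h g. E h \<circ> g) (replicate n c) id = E c ^^ n"
  by (induction n) auto

lemma Epi_uniform_partition:
  assumes "0 < t" "0 < n"
  shows "Epi P f (uniform_partition t n) = Eop P f (t / n) ^^ n"
proof -
  have ne: "uniform_partition t n \<noteq> {0}"
    using uniform_partition_mem[OF assms] assms by (auto simp: partitions_def)
  show ?thesis
    unfolding Epi_eq_foldr_partition_steps[OF ne] partition_steps_uniform_partition[OF assms]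
      foldr_comp_replicate by (rule refl)
qed

lemma classical_solution_cong:
  assumes u: "classical_solution P f u0 u" and eq: "\<And>t. 0 \<le> t \<Longrightarrow> v t = u t"
  shows "classical_solution P f u0 v"
proof -
  obtain u' where cont: "continuous_on {0..} u'"
    and u': "\<And>t. 0 \<le> t \<Longrightarrow> (u has_vector_derivative u' t) (at t within {0..}) \<and> u' t = Qop P f (u t)"
    and "u 0 = u0"
    using u unfolding classical_solution_def by blast
  have "(v has_vector_derivative u' t) (at t within {0..}) \<and> u' t = Qop P f (v t)" if "0 \<le> t" for t
    using u'[OF that] eq that by (auto intro: has_vector_derivative_transform[where f = u])
  moreover have "v 0 = u0" using eq[of 0] \<open>u 0 = u0\<close> by simp
  ultimately show ?thesis unfolding classical_solution_def using cont by blast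
qed

context bounded_Q_family
begin

lemma foldr_Eop_nth_le_solution:
  assumes sol: "classical_solution P f u0 v" and "\<forall>h\<in>set hs. 0 \<le> h"
  shows "foldr (\<lambda>h g. Eop P f h \<circ> g) hs id u0 $ i \<le> v (sum_list hs) $ i"
  using assms(2)
proof (induction hs arbitrary: i)
  case Nil
  then show ?case using classical_solutionD(1)[OF sol] by simp
next
  case (Cons h hs)
  then have h: "0 \<le> h" and "0 \<le> sum_list hs" by (auto intro: sum_list_nonneg)
  let ?X = "foldr (\<lambda>h g. Eop P f h \<circ> g) hs id u0"
  have "\<forall>j. ?X $ j \<le> v (sum_list hs) $ j + 0"
    using Cons by (simp add: comp_def id_def)
  then have "Eop P f h ?X $ i \<le> Eop P f h (v (sum_list hs)) $ i + 0"
    by (rule Eop_nth_le_shift[OF h])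
  also have "\<dots> \<le> v (sum_list hs + h) $ i"
    using Sq_nth_le_solution[OF sol _ \<open>0 \<le> sum_list hs\<close> h] by (auto intro: Eop_nth_le)
  finally have "Eop P f h ?X $ i \<le> v (h + sum_list hs) $ i" by (simp only: add.commute)
  moreover have "foldr (\<lambda>h g. Eop P f h \<circ> g) (h # hs) id u0 = Eop P f h ?X" by simp
  ultimately show ?case by (metis sum_list.Cons)
qed

lemma Epi_nth_le_solution:
  assumes sol: "classical_solution P f u0 v" and \<pi>: "\<pi> \<in> partitions t"
  shows "Epi P f \<pi> u0 $ i \<le> v t $ i"
proof (cases "\<pi> = {0}")
  case True
  then show ?thesis using \<pi> classical_solutionD(1)[OF sol] by (simp add: partitions_def Epi_def Eop_0)
next
  case False
  have "finite \<pi>" using \<pi> by (simp add: partitions_def)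
  then show ?thesis
    using foldr_Eop_nth_le_solution[OF sol, of "partition_steps \<pi>"] partition_steps_nonneg
    by (simp add: Epi_eq_foldr_partition_steps[OF False] sum_list_partition_steps[OF \<pi>])
qed

text \<open>In each step choose \<open>q\<close> attaining \<open>Qop P f (v s)\<close> up to \<open>h\<close> and compare the two tangent
  estimates; the error per step is \<open>D h\<^sup>2\<close>.\<close>

lemma solution_nth_le_Eop_iterate:
  assumes sol: "classical_solution P f u0 v" and R: "\<forall>j. \<bar>u0$j\<bar> \<le> R" and h: "0 < h"
  defines "D \<equiv> row_bound * (row_bound * R) / 2 + row_bound * (row_bound * R + f_bound) / 2 + 1"
  shows "v (real k * h) $ i \<le> (Eop P f h ^^ k) u0 $ i + real k * D * h^2"
proof (induction k arbitrary: i)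
  case 0
  then show ?case using classical_solutionD(1)[OF sol] by simp
next
  case (Suc k)
  define s where "s = real k * h"
  define w where "w = v s"
  have s: "0 \<le> s" using h by (simp add: s_def)
  have "Qop P f w $ i - h < (SUP q\<in>P. (q *v w + f q) $ i)" using h Qop_nth[of w i] by linarith
  then obtain q where q: "q \<in> P" "Qop P f w $ i - h < (q *v w + f q) $ i"
    using less_cSUP_iff[OF P_nonempty Qop_bdd[rule_format]] by blast
  have "v (s + h) $ i \<le> w $ i + h * Qop P f w $ i + (row_bound * (row_bound * R) / 2) * h^2"
    using solution_nth_le_tangent[OF sol R s, of h i] h by (simp add: w_def)
  moreover have "w$i + h * (q *v w + f q)$i - (row_bound * (row_bound * R + f_bound) / 2) * h^2
      \<le> Sq f q h w $ i"
    using abs_solution_nth_le[OF sol R s] h by (intro Sq_nth_ge_tangent q(1)) (auto simp: w_def)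
  moreover have "h * Qop P f w $ i \<le> h * (q *v w + f q) $ i + h^2"
    using mult_left_mono[OF less_imp_le[OF q(2)], of h] h by (simp add: algebra_simps power2_eq_square)
  moreover have "Sq f q h w $ i \<le> Eop P f h w $ i"
    using q(1) h by (intro Sq_nth_le_Eop_nth) auto
  moreover have "Eop P f h w $ i \<le> Eop P f h ((Eop P f h ^^ k) u0) $ i + real k * D * h^2"
    using Suc h by (intro Eop_nth_le_shift) (auto simp: w_def s_def)
  moreover have "real (Suc k) * D * h^2 = real k * D * h^2 + (row_bound * (row_bound * R) / 2) * h^2
      + (row_bound * (row_bound * R + f_bound) / 2) * h^2 + h^2"
    unfolding D_def by (simp add: field_simps)
  ultimately have "v (s + h) $ i \<le> Eop P f h ((Eop P f h ^^ k) u0) $ i + real (Suc k) * D * h^2"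
    by linarith
  moreover have "s + h = real (Suc k) * h" by (simp add: s_def algebra_simps)
  ultimately show ?case by simp
qed

lemma nisio_nth: "nisio P f t u0 $ i = (SUP \<pi>\<in>partitions t. Epi P f \<pi> u0 $ i)"
  by (simp add: nisio_def vSup_def)

lemma partitions_nonempty: "0 \<le> t \<Longrightarrow> partitions t \<noteq> {}"
  by (auto simp: partitions_def intro!: exI[of _ "{0, t}"])

lemma nisio_nth_le_solution:
  assumes sol: "classical_solution P f u0 v" and t: "0 \<le> t"
  shows "nisio P f t u0 $ i \<le> v t $ i"
  unfolding nisio_nth by (rule cSUP_least[OF partitions_nonempty[OF t] Epi_nth_le_solution[OF sol]])

lemma Epi_nth_le_nisio_nth:
  assumes sol: "classical_solution P f u0 v" and \<pi>: "\<pi> \<in> partitions t"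
  shows "Epi P f \<pi> u0 $ i \<le> nisio P f t u0 $ i"
  unfolding nisio_nth using Epi_nth_le_solution[OF sol] by (intro cSUP_upper[OF \<pi>] bdd_aboveI2)

lemma solution_nth_le_nisio_nth:
  assumes sol: "classical_solution P f u0 v" and t: "0 < t"
  shows "v t $ i \<le> nisio P f t u0 $ i"
proof -
  define R where "R = (\<Sum>j\<in>UNIV. \<bar>u0$j\<bar>)"
  have R: "\<forall>j. \<bar>u0$j\<bar> \<le> R" unfolding R_def by (auto intro: member_le_sum)
  define D where "D = row_bound * (row_bound * R) / 2 + row_bound * (row_bound * R + f_bound) / 2 + 1"
  have approx: "v t $ i \<le> nisio P f t u0 $ i + D * t^2 / n" if "0 < n" for n :: nat
  proof -
    have "v (real n * (t / n)) $ i \<le> (Eop P f (t / n) ^^ n) u0 $ i + real n * D * (t / n)^2"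
      using t that by (intro solution_nth_le_Eop_iterate[OF sol R, folded D_def]) simp
    moreover have "real n * (t / n) = t" "real n * D * (t / n)^2 = D * t^2 / n"
      using that by (simp_all add: power2_eq_square)
    moreover have "(Eop P f (t / n) ^^ n) u0 $ i = Epi P f (uniform_partition t n) u0 $ i"
      by (simp only: Epi_uniform_partition[OF t that])
    moreover have "\<dots> \<le> nisio P f t u0 $ i"
      by (rule Epi_nth_le_nisio_nth[OF sol uniform_partition_mem[OF t that]])
    ultimately show ?thesis by simp
  qed
  have "(\<lambda>n. nisio P f t u0 $ i + D * t^2 / real n) \<longlonglongrightarrow> nisio P f t u0 $ i"
    using tendsto_add[OF tendsto_const lim_const_over_n] by simp
  then show ?thesis
    by (rule LIMSEQ_le_const) (use approx in \<open>auto intro!: exI[of _ 1]\<close>)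
qed

lemma nisio_eq_solution:
  assumes sol: "classical_solution P f u0 v" and t: "0 \<le> t"
  shows "nisio P f t u0 = v t"
proof -
  have "v t $ i \<le> nisio P f t u0 $ i" for i
  proof (cases "t = 0")
    case True
    then have "Epi P f {0} u0 $ i \<le> nisio P f t u0 $ i"
      by (intro Epi_nth_le_nisio_nth[OF sol]) (simp add: partitions_def)
    then show ?thesis using True classical_solutionD(1)[OF sol] by (simp add: Epi_def Eop_0)
  next
    case False
    then show ?thesis using t solution_nth_le_nisio_nth[OF sol] by simp
  qed
  then show ?thesis
    using nisio_nth_le_solution[OF sol t] by (simp add: vec_eq_iff order_antisym)
qed

end

theorem mainTheorem12:
  fixes P :: "(real^'n^'n) set" and f :: "real^'n^'n \<Rightarrow> real^'n" and q0 :: "real^'n^'n"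
    and u0 :: "real^'n"
  assumes QP: "\<forall>q\<in>P. Q_matrix q"
    and q0: "q0 \<in> P" "f q0 = 0"
    and fsup: "\<forall>q\<in>P. \<forall>i. f q $ i \<le> 0"
    and Qfin: "\<forall>u i. bdd_above ((\<lambda>q. (q *v u + f q) $ i) ` P)"
    and fbdd: "\<exists>C. \<forall>q\<in>P. (\<forall>i. \<bar>f q $ i\<bar> \<le> C)"
  shows "classical_solution P f u0 (\<lambda>t. nisio P f t u0)
     \<and> (\<forall>v. classical_solution P f u0 v \<longrightarrow> (\<forall>t\<ge>0. v t = nisio P f t u0))"
proof -
  interpret bounded_Q_family P f q0
    using assms by unfold_locales auto
  obtain u where u: "classical_solution P f u0 u"
    using classical_solution_exists by blast
  then have "classical_solution P f u0 (\<lambda>t. nisio P f t u0)"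
    by (rule classical_solution_cong) (rule nisio_eq_solution[OF u])
  then show ?thesis
    using nisio_eq_solution by auto
qed
end
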